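(* For $l>0$ let $KP_{3,4}^3(l)$ be the hyperbolic tetrakis truncated octahedron: take a hyperbolic truncated octahedron with all faces regular (squares and hexagons) and edge length $l$, and attach to each of its square faces a pyramid obtained by subdividing a regular hyperbolic cube of edge length $l$ into six pyramids with apex at the center of the cube and bases the faces of the cube. Let $\alpha$ be the dihedral angle between two hexagonal faces of the truncated octahedron, $\beta$ the dihedral angle between a square and a hexagonal face of the truncated octahedron, and $\gamma$ the dihedral angle between the base and a side of the attached pyramid. Then there exists a value of $l$ such that \[\alpha+2\beta+2\gamma=2\pi.\]
   Context: The pyramids attached have dihedral angle $2\pi/3$ between adjacent triangular sides, since three cubes meet around each edge of the subdivision. *)

theory Defs
  imports Complex_Main
begin

text \<open>Hyperbolic 3-space: hyperboloid model in Minkowski space R^{3,1} (signature +,+,+,-),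
  with points given in the Beltrami--Klein model (open unit ball of R^3).\<close>

type_synonym pt3 = "real \<times> real \<times> real"
type_synonym vec4 = "real \<times> real \<times> real \<times> real"

definition mink :: "vec4 \<Rightarrow> vec4 \<Rightarrow> real" where
  "mink p q = (case p of (x1, y1, z1, t1) \<Rightarrow> case q of (x2, y2, z2, t2) \<Rightarrow>
      x1 * x2 + y1 * y2 + z1 * z2 - t1 * t2)"

definition in_klein_ball :: "pt3 \<Rightarrow> bool" where
  "in_klein_ball u = (case u of (x, y, z) \<Rightarrow> x^2 + y^2 + z^2 < 1)"

definition klein_lift :: "pt3 \<Rightarrow> vec4" where
  "klein_lift u = (case u of (x, y, z) \<Rightarrow>
     (let s = 1 / sqrt (1 - (x^2 + y^2 + z^2)) in (s * x, s * y, s * z, s)))"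

definition hdist :: "pt3 \<Rightarrow> pt3 \<Rightarrow> real" where
  "hdist u v = arcosh (- mink (klein_lift u) (klein_lift v))"

text \<open>A hyperbolic half-space, given in the Klein model as {x. n1 x + n2 y + n3 z \<le> c},
  is the half-space {X. <N, X> \<le> 0} of the hyperboloid with outward (spacelike) normal
  N = (n1, n2, n3, c).  The interior dihedral angle of a polyhedron along the edge where two
  of its bounding half-spaces with outward normals N1, N2 meet is the angle theta with
  cos theta = - <N1, N2> / (|N1| |N2|).\<close>
definition khalf :: "pt3 \<Rightarrow> real \<Rightarrow> vec4" where
  "khalf n c = (case n of (n1, n2, n3) \<Rightarrow> (n1, n2, n3, c))"

definition dihedral :: "vec4 \<Rightarrow> vec4 \<Rightarrow> real" where
  "dihedral N1 N2 = arccos (- mink N1 N2 / (sqrt (mink N1 N1) * sqrt (mink N2 N2)))"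

text \<open>Truncated octahedron centred at the origin of the Klein model with octahedral symmetry:
  vertices are all coordinate permutations of (0, \<plusminus>a, \<plusminus>b), 0 < a < b.  Its faces are the
  squares in the planes x = \<plusminus>b, y = \<plusminus>b, z = \<plusminus>b and the hexagons in the planes
  \<plusminus>x \<plusminus>y \<plusminus>z = a + b.  Edges are of two kinds: square/hexagon edges such as
  (b,0,a)--(b,a,0) and hexagon/hexagon edges such as (b,a,0)--(a,b,0).\<close>
definition TO_vertices :: "real \<Rightarrow> real \<Rightarrow> pt3 set" where
  "TO_vertices a b =
     (\<Union>\<sigma> \<in> {\<lambda>(x,y,z). (x,y,z), \<lambda>(x,y,z). (x,z,y), \<lambda>(x,y,z). (y,x,z),
              \<lambda>(x,y,z). (y,z,x), \<lambda>(x,y,z). (z,x,y), \<lambda>(x,y,z). (z,y,x)}.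
        \<sigma> ` {(0, s * a, t * b) | s t. s \<in> {1, -1} \<and> t \<in> {1, -1}})"

text \<open>The hyperbolic truncated octahedron with all faces regular and all edges of length l
  (its faces are then regular by the octahedral symmetry).\<close>
definition TO_config :: "real \<Rightarrow> real \<Rightarrow> real \<Rightarrow> bool" where
  "TO_config a b l \<longleftrightarrow> 0 < a \<and> a < b \<and> (\<forall>v \<in> TO_vertices a b. in_klein_ball v)
     \<and> hdist (b, 0, a) (b, a, 0) = l \<and> hdist (b, a, 0) (a, b, 0) = l"

text \<open>alpha: dihedral angle between two adjacent hexagons (faces x+y+z \<le> a+b, x+y-z \<le> a+b,
  along the edge (b,a,0)--(a,b,0)).\<close>
definition TO_alpha :: "real \<Rightarrow> real \<Rightarrow> real" where
  "TO_alpha a b = dihedral (khalf (1, 1, 1) (a + b)) (khalf (1, 1, -1) (a + b))"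

text \<open>beta: dihedral angle between a square and a hexagon (faces x \<le> b, x+y+z \<le> a+b,
  along the edge (b,0,a)--(b,a,0)).\<close>
definition TO_beta :: "real \<Rightarrow> real \<Rightarrow> real" where
  "TO_beta a b = dihedral (khalf (1, 0, 0) b) (khalf (1, 1, 1) (a + b))"

text \<open>Regular cube centred at the origin of the Klein model, vertices (\<plusminus>c, \<plusminus>c, \<plusminus>c), edge l.\<close>
definition cube_config :: "real \<Rightarrow> real \<Rightarrow> bool" where
  "cube_config c l \<longleftrightarrow> 0 < c \<and> in_klein_ball (c, c, c) \<and> hdist (c, c, c) (c, c, -c) = l"

text \<open>gamma: the pyramid with apex the centre of the cube and base the face x = c is
  {x \<le> c, y \<le> x, -y \<le> x, z \<le> x, -z \<le> x}; gamma is the dihedral angle between the base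
  (x \<le> c) and the side -x + y \<le> 0.\<close>
definition pyr_gamma :: "real \<Rightarrow> real" where
  "pyr_gamma c = dihedral (khalf (1, 0, 0) c) (khalf (-1, 1, 0) 0)"

end

theory Submission
  imports Defs
begin

text \<open>Take cosh l = 3/2. In the Klein model the two kinds of edges of the truncated octahedron
  have cosh-lengths (1 - b^2)/(1 - a^2 - b^2) and (1 - 2ab)/(1 - a^2 - b^2), so regularity
  forces b = 2a, and then cosh l = 3/2 gives a^2 = 1/7; for the cube likewise c^2 = 1/7.
  At these values cos \<alpha> = 1/6 and cos \<beta> = -1/6, so \<beta> = \<pi> - \<alpha>, while
  cos^2 \<gamma> = 7/12 = (1 + cos \<alpha>)/2, so \<gamma> = \<alpha>/2 by the half-angle formula.
  Hence \<alpha> + 2\<beta> + 2\<gamma> = \<alpha> + (2\<pi> - 2\<alpha>) + \<alpha> = 2\<pi>.\<close>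

lemma minus_mink_klein_lift:
  assumes "x^2 + y^2 + z^2 < 1" "u^2 + v^2 + w^2 < 1"
  shows "- mink (klein_lift (x, y, z)) (klein_lift (u, v, w)) =
    (1 - (x*u + y*v + z*w)) / (sqrt (1 - (x^2 + y^2 + z^2)) * sqrt (1 - (u^2 + v^2 + w^2)))"
  using assms by (simp add: mink_def klein_lift_def Let_def field_simps)

lemma hdist_klein:
  assumes "x^2 + y^2 + z^2 < 1" "u^2 + v^2 + w^2 < 1"
  shows "hdist (x, y, z) (u, v, w) =
    arcosh ((1 - (x*u + y*v + z*w)) / (sqrt (1 - (x^2 + y^2 + z^2)) * sqrt (1 - (u^2 + v^2 + w^2))))"
  unfolding hdist_def minus_mink_klein_lift[OF assms] ..

lemma arcosh_eq_iff_real: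
  fixes x y :: real
  assumes "x \<ge> 1" "y \<ge> 1"
  shows "arcosh x = arcosh y \<longleftrightarrow> x = y"
  using assms by (metis cosh_arcosh_real)

lemma arccos_half_angle:
  assumes "-1 \<le> x" "x \<le> 1"
  shows "arccos x = 2 * arccos (sqrt ((1 + x) / 2))"
proof -
  define g where "g = arccos (sqrt ((1 + x) / 2))"
  have s: "0 \<le> sqrt ((1 + x) / 2)" "sqrt ((1 + x) / 2) \<le> 1"
    using assms by auto
  have "0 \<le> g"
    unfolding g_def by (rule arccos_lbound) (use s in linarith)+
  moreover have "g \<le> pi / 2"
    unfolding g_def using s by (rule arccos_le_pi2)
  moreover have "cos g = sqrt ((1 + x) / 2)"
    unfolding g_def by (rule cos_arccos) (use s in linarith)+
  then have "cos (2 * g) = x"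
    unfolding cos_double_cos using assms by (simp add: field_simps)
  ultimately show ?thesis
    unfolding g_def[symmetric] using arccos_cos[of "2 * g"] by simp
qed

lemma TO_vertices_norm:
  "(x, y, z) \<in> TO_vertices a b \<Longrightarrow> x^2 + y^2 + z^2 = a^2 + b^2"
  unfolding TO_vertices_def by (auto simp: power_mult_distrib)

lemma TO_vertices_0_a_b: "(0, a, b) \<in> TO_vertices a b"
  unfolding TO_vertices_def by force

lemma TO_config_iff:
  "TO_config a b l \<longleftrightarrow>
    0 < a \<and> b = 2 * a \<and> 5 * a^2 < 1 \<and> l = arcosh ((1 - 4 * a^2) / (1 - 5 * a^2))"
proof
  assume TO: "TO_config a b l"
  then have ab: "0 < a" "a < b" and "in_klein_ball (0, a, b)"
    using TO_vertices_0_a_b unfolding TO_config_def by auto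
  then have ball: "a^2 + b^2 < 1" by (simp add: in_klein_ball_def)
  have l: "l = arcosh ((1 - b^2) / (1 - (a^2 + b^2)))"
    and "l = arcosh ((1 - 2*a*b) / (1 - (a^2 + b^2)))"
    using TO ball unfolding TO_config_def
    by (simp_all add: hdist_klein power2_eq_square add.commute mult.assoc)
  moreover have "(1 - b^2) / (1 - (a^2 + b^2)) \<ge> 1" "(1 - 2*a*b) / (1 - (a^2 + b^2)) \<ge> 1"
    using ball sum_squares_bound[of a b] by (simp_all add: divide_simps power2_eq_square)
  ultimately have "(1 - b^2) / (1 - (a^2 + b^2)) = (1 - 2*a*b) / (1 - (a^2 + b^2))"
    using arcosh_eq_iff_real by metis
  then have "b * b = 2 * a * b"
    using ball by (simp add: power2_eq_square)
  then have "b = 2 * a" using ab by simp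
  then show "0 < a \<and> b = 2 * a \<and> 5 * a^2 < 1 \<and> l = arcosh ((1 - 4 * a^2) / (1 - 5 * a^2))"
    using ab ball l by (simp add: power_mult_distrib)
next
  assume "0 < a \<and> b = 2 * a \<and> 5 * a^2 < 1 \<and> l = arcosh ((1 - 4 * a^2) / (1 - 5 * a^2))"
  then have a: "0 < a" "5 * a^2 < 1" and b: "b = 2 * a"
    and l: "l = arcosh ((1 - 4 * a^2) / (1 - 5 * a^2))"
    by auto
  have "in_klein_ball v" if "v \<in> TO_vertices a b" for v
    using that a b TO_vertices_norm by (cases v) (auto simp: in_klein_ball_def power_mult_distrib)
  moreover have "hdist (b, 0, a) (b, a, 0) = l" "hdist (b, a, 0) (a, b, 0) = l"
    using a unfolding b l
    by (simp_all add: hdist_klein algebra_simps flip: power2_eq_square)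
  ultimately show "TO_config a b l"
    unfolding TO_config_def using a b by auto
qed

lemma cube_config_iff:
  "cube_config c l \<longleftrightarrow> 0 < c \<and> 3 * c^2 < 1 \<and> l = arcosh ((1 - c^2) / (1 - 3 * c^2))"
  by (auto simp: cube_config_def in_klein_ball_def hdist_klein power2_eq_square)

lemma
  assumes "7 * a^2 = 1"
  shows TO_alpha_cosh_3_2: "TO_alpha a (2 * a) = arccos (1 / 6)"
    and TO_beta_cosh_3_2: "TO_beta a (2 * a) = arccos (- 1 / 6)"
proof -
  have a2: "a^2 = 1 / 7" using assms by simp
  have "TO_alpha a (2 * a) = arccos ((9 * a^2 - 1) / \<bar>3 - 9 * a^2\<bar>)"
    by (simp add: TO_alpha_def dihedral_def khalf_def mink_def algebra_simps power2_eq_square)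
  also have "\<dots> = arccos (1 / 6)"
    by (simp add: a2)
  finally show "TO_alpha a (2 * a) = arccos (1 / 6)" .
  have "TO_beta a (2 * a) = arccos ((6 * a^2 - 1) / (sqrt (1 - 4 * a^2) * sqrt (3 - 9 * a^2)))"
    by (simp add: TO_beta_def dihedral_def khalf_def mink_def algebra_simps power2_eq_square)
  also have "\<dots> = arccos (- 1 / 6)"
    by (simp add: a2 real_sqrt_mult[symmetric] real_sqrt_divide)
  finally show "TO_beta a (2 * a) = arccos (- 1 / 6)" .
qed

lemma pyr_gamma_cosh_3_2:
  assumes "7 * c^2 = 1"
  shows "pyr_gamma c = arccos (sqrt (7 / 12))"
proof -
  have "pyr_gamma c = arccos (1 / (sqrt (1 - c^2) * sqrt 2))"
    by (simp add: pyr_gamma_def dihedral_def khalf_def mink_def power2_eq_square)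
  also have "\<dots> = arccos (sqrt (7 / 12))"
  proof -
    have "c^2 = 1 / 7" using assms by simp
    then have "sqrt (1 - c^2) * sqrt 2 = sqrt (12 / 7)"
      by (simp add: real_sqrt_mult[symmetric])
    then show ?thesis
      by (simp add: real_sqrt_divide)
  qed
  finally show ?thesis .
qed

lemma TO_config_cosh_3_2:
  "TO_config a b (arcosh (3 / 2)) \<longleftrightarrow> 0 < a \<and> b = 2 * a \<and> 7 * a^2 = 1"
proof -
  have "arcosh ((1 - 4 * a^2) / (1 - 5 * a^2)) = arcosh (3 / 2) \<longleftrightarrow> 7 * a^2 = 1"
    if "5 * a^2 < 1"
    using that by (subst arcosh_eq_iff_real) (simp_all add: divide_simps)
  then show ?thesis
    unfolding TO_config_iff by auto
qed

lemma cube_config_cosh_3_2: "cube_config c (arcosh (3 / 2)) \<longleftrightarrow> 0 < c \<and> 7 * c^2 = 1"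
proof -
  have "arcosh ((1 - c^2) / (1 - 3 * c^2)) = arcosh (3 / 2) \<longleftrightarrow> 7 * c^2 = 1"
    if "3 * c^2 < 1"
    using that by (subst arcosh_eq_iff_real) (simp_all add: divide_simps)
  then show ?thesis
    unfolding cube_config_iff by auto
qed

theorem theorem7p1:
  shows "\<exists>l::real. l > 0 \<and> (\<exists>a b. TO_config a b l) \<and> (\<exists>c. cube_config c l) \<and>
    (\<forall>a b c. TO_config a b l \<longrightarrow> cube_config c l \<longrightarrow>
       TO_alpha a b + 2 * TO_beta a b + 2 * pyr_gamma c = 2 * pi)"
proof (intro exI conjI allI impI)
  show "0 < arcosh (3 / 2 :: real)" by simp
  have "0 < 1 / sqrt 7" "7 * (1 / sqrt 7)^2 = (1::real)"
    by (simp_all add: power_divide)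
  then show "TO_config (1 / sqrt 7) (2 * (1 / sqrt 7)) (arcosh (3 / 2))"
    and "cube_config (1 / sqrt 7) (arcosh (3 / 2))"
    by (simp_all only: TO_config_cosh_3_2 cube_config_cosh_3_2)
next
  fix a b c :: real
  assume "TO_config a b (arcosh (3 / 2))" "cube_config c (arcosh (3 / 2))"
  then have b: "b = 2 * a" and a: "7 * a^2 = 1" and c: "7 * c^2 = 1"
    by (simp_all add: TO_config_cosh_3_2 cube_config_cosh_3_2)
  have "pyr_gamma c = arccos (1 / 6) / 2"
    using pyr_gamma_cosh_3_2[OF c] arccos_half_angle[of "1 / 6"] by simp
  moreover have "TO_beta a b = pi - arccos (1 / 6)"
    using TO_beta_cosh_3_2[OF a] arccos_minus[of "1 / 6"] b by simp
  ultimately show "TO_alpha a b + 2 * TO_beta a b + 2 * pyr_gamma c = 2 * pi"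
    using TO_alpha_cosh_3_2[OF a] b by simp
qed

end
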